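(* Let $X$ be a Banach space and let $A\subseteq \mathcal{B}(X)$ be a norm-closed subalgebra. Suppose that $A$ is bicontinuously isomorphic (as an algebra) to a quasi-directly finite $C^*$-algebra. Then $A$ is surjunctive, i.e. for every $a\in A$ the residual spectrum of $a$ is empty.
   Context: $\mathcal{B}(X)$ denotes the algebra of bounded linear operators on $X$. For $T\in\mathcal{B}(X)$, the residual spectrum of $T$ is the set of $\lambda\in\mathbb{C}$ such that $T-\lambda I$ is injective with closed range that is a proper subspace of $X$. A subalgebra $A\subseteq\mathcal{B}(X)$ is called surjunctive if every $a\in A$ has empty residual spectrum. For elements $a,b$ of a ring $R$ (not necessarily unital), put $a\diamond b := a+b-ab$; if $a\diamond b=0$, $a$ is called a left quasi-inverse of $b$ and $b$ a right quasi-inverse of $a$. A ring $R$ is quasi-directly finite if every element of $R$ which has a left quasi-inverse in $R$ also has a right quasi-inverse in $R$ (equivalently: whenever $a,b\in R$ satisfy $a\diamond b=0$, also $b\diamond a=0$). An algebra is quasi-directly finite if its underlying ring is. *)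

theory Defs
  imports "HOL-Analysis.Analysis"
begin

class complex_normed_vector = real_normed_vector +
  fixes cscale :: "complex \<Rightarrow> 'a \<Rightarrow> 'a"
  assumes cscale_add_right: "cscale c (x + y) = cscale c x + cscale c y"
    and cscale_add_left: "cscale (c + d) x = cscale c x + cscale d x"
    and cscale_cscale: "cscale c (cscale d x) = cscale (c * d) x"
    and cscale_one: "cscale 1 x = x"
    and scaleR_cscale: "scaleR r x = cscale (complex_of_real r) x"
    and norm_cscale: "norm (cscale c x) = cmod c * norm x"

class complex_banach = complex_normed_vector + banach

class cstar_algebra = complex_banach + real_normed_algebra +
  fixes cstar :: "'a \<Rightarrow> 'a"
  assumes mult_cscale_left: "cscale c x * y = cscale c (x * y)"
    and mult_cscale_right: "x * cscale c y = cscale c (x * y)"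
    and cstar_add: "cstar (x + y) = cstar x + cstar y"
    and cstar_cscale: "cstar (cscale c x) = cscale (cnj c) (cstar x)"
    and cstar_mult: "cstar (x * y) = cstar y * cstar x"
    and cstar_cstar: "cstar (cstar x) = x"
    and cstar_identity: "norm (cstar x * x) = (norm x)\<^sup>2"

definition qdiamond :: "'a::ring \<Rightarrow> 'a \<Rightarrow> 'a" where
  "qdiamond a b = a + b - a * b"

definition quasi_directly_finite :: "'a::ring itself \<Rightarrow> bool" where
  "quasi_directly_finite _ \<longleftrightarrow> (\<forall>a b :: 'a. qdiamond a b = 0 \<longrightarrow> qdiamond b a = 0)"

text \<open>\<open>B(X)\<close>: bounded complex-linear operators, as elements of the real blinfun space
  (whose norm is the operator norm) that commute with complex scalars.\<close>
definition BX :: "('a::complex_banach \<Rightarrow>\<^sub>L 'a) set" where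
  "BX = {T. \<forall>c x. blinfun_apply T (cscale c x) = cscale c (blinfun_apply T x)}"

definition subalgebra_BX :: "('a::complex_banach \<Rightarrow>\<^sub>L 'a) set \<Rightarrow> bool" where
  "subalgebra_BX A \<longleftrightarrow> A \<subseteq> BX \<and> 0 \<in> A
     \<and> (\<forall>S\<in>A. \<forall>T\<in>A. S + T \<in> A)
     \<and> (\<forall>S\<in>A. \<forall>T\<in>A. S o\<^sub>L T \<in> A)
     \<and> (\<forall>T\<in>A. \<forall>c. \<exists>S\<in>A. \<forall>x. blinfun_apply S x = cscale c (blinfun_apply T x))"

definition residual_spectrum :: "('a::complex_banach \<Rightarrow>\<^sub>L 'a) \<Rightarrow> complex set" where
  "residual_spectrum T =
     {l. inj (\<lambda>x. blinfun_apply T x - cscale l x)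
        \<and> closed (range (\<lambda>x. blinfun_apply T x - cscale l x))
        \<and> range (\<lambda>x. blinfun_apply T x - cscale l x) \<noteq> UNIV}"

definition surjunctive :: "('a::complex_banach \<Rightarrow>\<^sub>L 'a) set \<Rightarrow> bool" where
  "surjunctive A \<longleftrightarrow> (\<forall>a\<in>A. residual_spectrum a = {})"

definition bicont_alg_iso :: "('a::complex_banach \<Rightarrow>\<^sub>L 'a) set \<Rightarrow> (('a \<Rightarrow>\<^sub>L 'a) \<Rightarrow> 'b::cstar_algebra) \<Rightarrow> bool" where
  "bicont_alg_iso A \<phi> \<longleftrightarrow> bij_betw \<phi> A UNIV
     \<and> (\<forall>S\<in>A. \<forall>T\<in>A. \<phi> (S + T) = \<phi> S + \<phi> T)
     \<and> (\<forall>S\<in>A. \<forall>T\<in>A. \<phi> (S o\<^sub>L T) = \<phi> S * \<phi> T)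
     \<and> (\<forall>S\<in>A. \<forall>T\<in>A. \<forall>c. (\<forall>x. blinfun_apply S x = cscale c (blinfun_apply T x))
            \<longrightarrow> \<phi> S = cscale c (\<phi> T))
     \<and> continuous_on A \<phi> \<and> continuous_on UNIV (inv_into A \<phi>)"

end

theory Submission
  imports Defs
begin

text \<open>If \<open>a - \<lambda>\<close> is injective with closed range it is bounded below (a Baire category argument),
  and the bicontinuous isomorphism \<open>\<phi>\<close> carries lower bounds from \<open>A\<close> to the C*-algebra. For
  \<open>\<lambda> = 0\<close> this forces \<open>A\<close> to contain the identity, and in general \<open>a - \<lambda>\<close> is a nonzero multiple
  of \<open>1 - b\<close> with \<open>b \<in> A\<close>, so left multiplication by \<open>1 - \<phi> b\<close> is bounded below. A continuity
  argument in the imaginary part of a spectral parameter, driven by the C*-identity, turns this into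
  a left quasi-inverse of \<open>\<phi> b\<close>; quasi-direct finiteness makes it a right quasi-inverse, which
  pulls back to a right inverse of \<open>1 - b\<close>. Hence \<open>a - \<lambda>\<close> is onto.\<close>

lemma bounded_linear_cscale: "bounded_linear (cscale c :: 'a::complex_normed_vector \<Rightarrow> 'a)"
proof (rule bounded_linear_intro[of _ "cmod c"])
  show "cscale c (scaleR r x) = scaleR r (cscale c x)" for r and x :: 'a
    by (simp add: scaleR_cscale cscale_cscale mult.commute)
qed (simp_all add: cscale_add_right norm_cscale mult.commute)

lemma cscale_diff_right: "cscale c (x - y :: 'a::complex_normed_vector) = cscale c x - cscale c y"
  using bounded_linear_cscale by (rule linear_simps)

lemma cscale_of_real: "cscale (complex_of_real r) x = scaleR r (x :: 'a::complex_normed_vector)"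
  by (simp add: scaleR_cscale)

lemma cscale_zero_left [simp]: "cscale 0 x = (0 :: 'a::complex_normed_vector)"
  using scaleR_cscale[of 0 x] by simp

lemma cscale_minus_left: "cscale (- c) x = - cscale c (x :: 'a::complex_normed_vector)"
proof -
  have "cscale (- c) x + cscale c x = 0"
    using cscale_add_left[of "- c" c x] by simp
  then show ?thesis by (simp add: eq_neg_iff_add_eq_0)
qed

lemma cscale_cscale_inverse [simp]:
  "c \<noteq> 0 \<Longrightarrow> cscale c (cscale (inverse c) x) = (x :: 'a::complex_normed_vector)"
  by (simp add: cscale_cscale cscale_one)

context cstar_algebra
begin

lemma cstar_zero [simp]: "cstar 0 = 0"
proof -
  have "cstar 0 + cstar 0 = cstar 0 + 0" by (simp flip: cstar_add)
  then show ?thesis by (rule add_left_imp_eq)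
qed

lemma cstar_minus: "cstar (- x) = - cstar x"
proof -
  have "cstar (- x) + cstar x = 0" by (simp flip: cstar_add)
  then show ?thesis by (simp add: eq_neg_iff_add_eq_0)
qed

lemma cstar_diff: "cstar (x - y) = cstar x - cstar y"
  by (simp only: diff_conv_add_uminus cstar_add cstar_minus)

lemma cstar_scaleR: "cstar (scaleR r x) = scaleR r (cstar x)"
  by (simp add: scaleR_cscale cstar_cscale)

lemma norm_cstar [simp]: "norm (cstar x) = norm x"
proof -
  have le: "norm y \<le> norm (cstar y)" for y
  proof (cases "y = 0")
    case False
    have "(norm y)\<^sup>2 \<le> norm (cstar y) * norm y"
      using cstar_identity[of y] norm_mult_ineq[of "cstar y" y] by simp
    then show ?thesis using False by (simp add: power2_eq_square)
  qed simp
  show ?thesis using le[of x] le[of "cstar x"] by (simp add: cstar_cstar)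
qed

end

text \<open>With \<open>x = a + \<i> b\<close> we have \<open>a = (x + x\<^sup>*)/2\<close>.\<close>
lemma norm_selfadjoint_le_norm_add_i:
  fixes a b :: "'a::cstar_algebra"
  assumes "cstar a = a" "cstar b = b"
  shows "norm a \<le> norm (a + cscale \<i> b)"
proof -
  let ?x = "a + cscale \<i> b"
  have "?x + cstar ?x = scaleR 2 a"
    using assms by (simp add: cstar_add cstar_cscale cscale_minus_left scaleR_2)
  then have "2 * norm a = norm (?x + cstar ?x)" by simp
  also have "\<dots> \<le> 2 * norm ?x" using norm_triangle_ineq[of ?x "cstar ?x"] by simp
  finally show ?thesis by simp
qed

section \<open>Surjectivity of shifted left multiplications\<close>

lemma norm_shifted_mult_lower:
  fixes Q z :: "'a::cstar_algebra"
  assumes Q: "cstar Q = Q"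
    and low: "m * (norm z)\<^sup>2 \<le> norm (cstar z * (scaleR p z + Q * z))"
  shows "m * norm z \<le> norm (cscale (complex_of_real p + \<i> * complex_of_real t) z + Q * z)"
proof (cases "z = 0")
  case False
  let ?L = "cscale (complex_of_real p + \<i> * complex_of_real t) z + Q * z"
  define P where "P = cstar z * (scaleR p z + Q * z)"
  define R where "R = scaleR t (cstar z * z)"
  have P: "cstar P = P"
    by (simp add: P_def cstar_mult cstar_add cstar_scaleR Q cstar_cstar mult.assoc
        distrib_left distrib_right)
  have R: "cstar R = R" by (simp add: R_def cstar_scaleR cstar_mult cstar_cstar)
  have "cstar z * ?L = P + cscale \<i> R"
    by (simp only: P_def R_def distrib_left mult_cscale_right cscale_add_left cscale_of_real
        cscale_cscale[symmetric] mult_scaleR_right add_ac)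
  then have "norm P \<le> norm (cstar z * ?L)"
    using norm_selfadjoint_le_norm_add_i[OF P R] by simp
  also have "\<dots> \<le> norm z * norm ?L"
    using norm_mult_ineq[of "cstar z" ?L] by simp
  finally have "norm z * (m * norm z) \<le> norm z * norm ?L"
    using low by (simp add: P_def power2_eq_square mult_ac)
  then show ?thesis using False by simp
qed simp

lemma surj_shifted_mult_large:
  fixes Q :: "'a::cstar_algebra"
  assumes large: "norm Q < cmod c"
  shows "surj (\<lambda>z. cscale c z + Q * z)"
  unfolding surj_def
proof
  fix w
  have c: "c \<noteq> 0" using large norm_ge_zero[of Q] by auto
  define F where "F z = cscale (inverse c) (w - Q * z)" for z
  define k where "k = norm Q / cmod c"
  have k: "0 \<le> k" "k < 1"
    unfolding k_def using large norm_ge_zero[of Q] by (simp_all add: divide_less_eq_1)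
  have "dist (F x) (F y) \<le> k * dist x y" for x y
  proof -
    have "dist (F x) (F y) = norm (Q * (y - x)) / cmod c"
      by (simp add: F_def dist_norm norm_cscale norm_inverse divide_inverse_commute
          cscale_diff_right[symmetric] right_diff_distrib)
    also have "\<dots> \<le> k * dist x y"
      using norm_mult_ineq[of Q "y - x"] c
      by (simp add: k_def dist_norm norm_minus_commute divide_right_mono)
    finally show ?thesis .
  qed
  then obtain z where "F z = z" using banach_fix_type[OF k] by blast
  then have "cscale c z = w - Q * z" using c by (metis F_def cscale_cscale_inverse)
  then show "\<exists>z. w = cscale c z + Q * z" by (metis diff_add_cancel)
qed

text \<open>A right inverse of \<open>f\<close> is \<open>1/m\<close>-Lipschitz, which makes \<open>z \<mapsto> f\<^sup>-\<^sup>1 (w - d z)\<close> a contraction.\<close>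
lemma surj_add_cscale_if_bounded_below:
  fixes f :: "'a::complex_banach \<Rightarrow> 'a"
  assumes f: "bounded_linear f" and below: "\<And>x. m * norm x \<le> norm (f x)"
    and "surj f" and small: "cmod d < m"
  shows "surj (\<lambda>x. f x + cscale d x)"
  unfolding surj_def
proof
  fix w
  interpret f: bounded_linear f by (rule f)
  have m: "0 < m" using small norm_ge_zero[of d] by linarith
  define g where "g = inv f"
  have fg: "f (g u) = u" for u using \<open>surj f\<close> by (simp add: g_def surj_f_inv_f)
  have g_lipschitz: "m * norm (g u - g v) \<le> norm (u - v)" for u v
    using below[of "g u - g v"] by (simp add: f.diff fg)
  define F where "F z = g (w - cscale d z)" for z
  define k where "k = cmod d / m"
  have k: "0 \<le> k" "k < 1" using small m by (auto simp: k_def)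
  have "dist (F x) (F y) \<le> k * dist x y" for x y
  proof -
    have "m * dist (F x) (F y) \<le> cmod d * dist x y"
      using g_lipschitz[of "w - cscale d x" "w - cscale d y"]
      by (simp add: F_def dist_norm cscale_diff_right[symmetric] norm_cscale norm_minus_commute)
    then show ?thesis using m by (simp add: k_def field_simps)
  qed
  then obtain z where "F z = z" using banach_fix_type[OF k] by blast
  then have "f z = w - cscale d z" using fg by (metis F_def)
  then show "\<exists>z. w = f z + cscale d z" by (metis diff_add_cancel)
qed

text \<open>Continuity method: the operators \<open>z \<mapsto> (p + \<i> t) z + Q z\<close> are uniformly bounded below, surjective
  for large \<open>t\<close>, and surjectivity passes from \<open>t + m/2\<close> to \<open>t\<close>.\<close>
lemma surj_scaleR_add_mult:
  fixes Q :: "'a::cstar_algebra"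
  assumes Q: "cstar Q = Q" and m: "0 < m"
    and low: "\<And>z. m * (norm z)\<^sup>2 \<le> norm (cstar z * (scaleR p z + Q * z))"
  shows "surj (\<lambda>z. scaleR p z + Q * z)"
proof -
  define L where "L t z = cscale (complex_of_real p + \<i> * complex_of_real t) z + Q * z" for t z
  have below: "m * norm z \<le> norm (L t z)" for t z
    unfolding L_def by (rule norm_shifted_mult_lower[OF Q low])
  have bl: "bounded_linear (L t)" for t
    unfolding L_def by (intro bounded_linear_add bounded_linear_cscale bounded_linear_mult_right)
  have step: "surj (L t)" if "surj (L (t + m/2))" for t
  proof -
    have coeff: "complex_of_real p + \<i> * complex_of_real t
        = (complex_of_real p + \<i> * complex_of_real (t + m/2)) + - \<i> * complex_of_real (m/2)"
      by (simp add: algebra_simps)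
    have "L t z = L (t + m/2) z + cscale (- \<i> * complex_of_real (m/2)) z" for z
      unfolding L_def coeff cscale_add_left by (simp only: ac_simps)
    then have "L t = (\<lambda>z. L (t + m/2) z + cscale (- \<i> * complex_of_real (m/2)) z)"
      by (rule ext)
    moreover have "surj (\<lambda>z. L (t + m/2) z + cscale (- \<i> * complex_of_real (m/2)) z)"
      using m by (intro surj_add_cscale_if_bounded_below[OF bl below that]) (simp add: norm_mult)
    ultimately show ?thesis by simp
  qed
  have surj_L: "surj (L t)" if "norm Q < t + real n * (m/2)" for n t
    using that
  proof (induction n arbitrary: t)
    case 0
    then have "norm Q < cmod (complex_of_real p + \<i> * complex_of_real t)"
      using abs_Im_le_cmod[of "complex_of_real p + \<i> * complex_of_real t"] by simp
    then show ?case unfolding L_def by (rule surj_shifted_mult_large)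
  next
    case (Suc n)
    have "real (Suc n) * (m/2) = m/2 + real n * (m/2)" by (simp add: ring_distribs)
    then have "norm Q < (t + m/2) + real n * (m/2)" using Suc.prems by linarith
    then show ?case by (rule step[OF Suc.IH])
  qed
  obtain n :: nat where "norm Q < real n * (m/2)"
    using reals_Archimedean3[of "m/2"] m by auto
  then have "surj (L 0)" using surj_L[of 0 n] by simp
  moreover have "L 0 = (\<lambda>z. scaleR p z + Q * z)" by (simp add: L_def fun_eq_iff cscale_of_real)
  ultimately show ?thesis by simp
qed

section \<open>Quasi-inverses and units from lower bounds\<close>

text \<open>Writing \<open>k = y\<^sup>* \<diamond> y\<close>, in the unitisation \<open>1 - k = (1 - y)\<^sup>* (1 - y)\<close>; the hypothesis makes
  left multiplication by \<open>1 - k\<close> bounded below in the sense of the continuity method, and the resulting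
  right quasi-inverse \<open>r\<close> of \<open>k\<close> yields the left quasi-inverse \<open>r\<^sup>* \<diamond> y\<^sup>*\<close> of \<open>y\<close>.\<close>
lemma left_quasi_inverse_if_bounded_below:
  fixes y :: "'a::cstar_algebra"
  assumes d: "0 < d" and low: "\<And>z. d * norm z \<le> norm (z - y * z)"
  shows "\<exists>c. qdiamond c y = 0"
proof -
  define k where "k = y + cstar y - cstar y * y"
  have k: "cstar (- k) = - k"
    by (simp add: k_def cstar_minus cstar_add cstar_diff cstar_mult cstar_cstar add_ac)
  have "d\<^sup>2 * (norm z)\<^sup>2 \<le> norm (cstar z * (scaleR 1 z + (- k) * z))" for z
  proof -
    have "cstar z * (scaleR 1 z + (- k) * z) = cstar (z - y * z) * (z - y * z)"
      by (simp add: k_def cstar_diff cstar_mult algebra_simps)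
    moreover have "(d * norm z)\<^sup>2 \<le> (norm (z - y * z))\<^sup>2"
      using low[of z] d by (intro power_mono) auto
    ultimately show ?thesis by (simp add: cstar_identity power_mult_distrib)
  qed
  then have "surj (\<lambda>z. scaleR 1 z + (- k) * z)"
    using d by (intro surj_scaleR_add_mult[OF k, of "d\<^sup>2"]) auto
  then obtain r where "- k = scaleR 1 r + (- k) * r" by (blast dest: surjD)
  then have "cstar (- k) = cstar (r - k * r)" by simp
  then have r: "cstar r - cstar r * k = - k" using k by (simp add: cstar_diff cstar_mult cstar_minus)
  have "qdiamond (cstar r + cstar y - cstar r * cstar y) y = cstar r + k - cstar r * k"
    by (simp add: qdiamond_def k_def algebra_simps)
  also have "\<dots> = 0" using r by (simp add: algebra_simps)
  finally show ?thesis by blast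
qed

text \<open>Left multiplication by \<open>Q = y\<^sup>* y\<close> is onto, so \<open>Q e = Q\<close> for some \<open>e\<close>; injectivity of left
  multiplication by \<open>Q\<close> makes \<open>e\<close> a left unit, and the involution turns it into a two-sided one.\<close>
lemma unit_exists_if_mult_bounded_below:
  fixes y :: "'a::cstar_algebra"
  assumes d: "0 < d" and low: "\<And>z. d * norm z \<le> norm (y * z)"
  shows "\<exists>e::'a. \<forall>z. e * z = z \<and> z * e = z"
proof -
  define Q where "Q = cstar y * y"
  have Q: "cstar Q = Q" by (simp add: Q_def cstar_mult cstar_cstar)
  have norm_Q: "norm (cstar z * (Q * z)) = (norm (y * z))\<^sup>2" for z
    using cstar_identity[of "y * z"] by (simp add: Q_def cstar_mult mult.assoc)
  have "d\<^sup>2 * (norm z)\<^sup>2 \<le> norm (cstar z * (scaleR 0 z + Q * z))" for z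
    using power_mono[OF low[of z]] d by (simp add: norm_Q power_mult_distrib)
  then have "surj (\<lambda>z. scaleR 0 z + Q * z)"
    using d by (intro surj_scaleR_add_mult[OF Q, of "d\<^sup>2"]) auto
  then obtain e where "Q = scaleR 0 e + Q * e" by (blast dest: surjD)
  then have e: "Q * e = Q" by simp
  have Q_inj: "z = 0" if "Q * z = 0" for z
    using that low[of z] d norm_Q[of z] by (simp add: mult_le_0_iff)
  have left: "e * z = z" for z
    using Q_inj[of "e * z - z"] e by (simp add: right_diff_distrib mult.assoc[symmetric])
  have right: "z * cstar e = z" for z
    by (metis cstar_cstar cstar_mult left)
  have "cstar e = e" by (metis left right)
  then show ?thesis using left right by metis
qed

section \<open>Injective operators with closed range are bounded below\<close>

lemma closure_image_cball_has_interior_point: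
  fixes T :: "'a::banach \<Rightarrow> 'c::banach"
  assumes T: "bounded_linear T" and closed_range: "closed (range T)"
  shows "\<exists>n::nat. \<exists>y0\<in>range T. \<exists>e>0.
           \<forall>y\<in>range T. dist y y0 < e \<longrightarrow> y \<in> closure (T ` cball 0 (real n))"
proof (rule ccontr)
  assume no_interior: "\<not> ?thesis"
  define X where "X = top_of_set (range T)"
  define \<G> where "\<G> = range (\<lambda>n::nat. range T \<inter> closure (T ` cball 0 (real n)))"
  have "X interior_of \<Union>\<G> = {}"
  proof (rule Baire_category_alt)
    show "completely_metrizable_space X \<or> locally_compact_space X \<and> regular_space X"
      unfolding X_def using closed_range
      by (metis closed_closedin completely_metrizable_space_closedin
          completely_metrizable_space_euclidean)
    show "countable \<G>" by (simp add: \<G>_def)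
    fix S assume "S \<in> \<G>"
    then obtain n where S: "S = range T \<inter> closure (T ` cball 0 (real n))" by (auto simp: \<G>_def)
    show "closedin X S \<and> X interior_of S = {}"
    proof
      show "closedin X S" unfolding X_def S by (rule closedin_closed_Int) simp
      show "X interior_of S = {}"
      proof (rule ccontr)
        assume "X interior_of S \<noteq> {}"
        then obtain y0 U where U: "openin X U" "y0 \<in> U" "U \<subseteq> S"
          by (auto simp: interior_of_def)
        then obtain V where V: "open V" "U = range T \<inter> V"
          by (auto simp: X_def openin_open)
        then obtain e where e: "e > 0" "ball y0 e \<subseteq> V"
          using U(2) by (meson IntD2 openE)
        have "y \<in> closure (T ` cball 0 (real n))" if "y \<in> range T" "dist y y0 < e" for y
        proof -
          have "y \<in> U" using that e V by (auto simp: dist_commute)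
          then show ?thesis using U S by auto
        qed
        moreover have "y0 \<in> range T" using U S by auto
        ultimately show False using no_interior e(1) by blast
      qed
    qed
  qed
  moreover have "\<Union>\<G> = range T"
  proof
    show "range T \<subseteq> \<Union>\<G>"
    proof
      fix y assume "y \<in> range T"
      then obtain x where x: "y = T x" by auto
      have "norm x \<le> real (nat \<lceil>norm x\<rceil>)" by linarith
      then have "y \<in> T ` cball 0 (real (nat \<lceil>norm x\<rceil>))" using x by auto
      then show "y \<in> \<Union>\<G>" unfolding \<G>_def using x closure_subset by fast
    qed
  qed (auto simp: \<G>_def)
  moreover have "X interior_of range T = range T"
    using interior_of_topspace[of X] by (simp add: X_def)
  ultimately show False by simp
qed

text \<open>The image of some ball is dense near a point \<open>y0\<close> of the range, and small points of the range
  are differences of two points near \<open>y0\<close>.\<close>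
lemma approximate_preimages_near_zero:
  fixes T :: "'a::banach \<Rightarrow> 'c::banach"
  assumes T: "bounded_linear T" and closed_range: "closed (range T)"
  obtains e K where "e > 0" "0 \<le> K"
    "\<And>w \<delta>. w \<in> range T \<Longrightarrow> norm w < e \<Longrightarrow> \<delta> > 0 \<Longrightarrow> \<exists>x. norm x \<le> K \<and> norm (w - T x) < \<delta>"
proof -
  interpret T: bounded_linear T by (rule T)
  obtain n :: nat and y0 e where e: "e > 0" and y0: "y0 \<in> range T"
    and dense: "\<And>y. y \<in> range T \<Longrightarrow> dist y y0 < e \<Longrightarrow> y \<in> closure (T ` cball 0 (real n))"
    using closure_image_cball_has_interior_point[OF T closed_range] by blast
  have small: "\<exists>x. norm x \<le> 2 * real n \<and> norm (w - T x) < \<delta>"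
    if w: "w \<in> range T" "norm w < e" and \<delta>: "\<delta> > 0" for w \<delta>
  proof -
    have "y0 + w \<in> range T" using y0 w by (auto simp flip: T.add)
    then have "y0 + w \<in> closure (T ` cball 0 (real n))"
      using dense w by (simp add: dist_norm)
    then have "\<exists>y\<in>T ` cball 0 (real n). dist y (y0 + w) < \<delta>/2"
      using \<delta> unfolding closure_approachable by (meson half_gt_zero)
    then obtain u where u: "norm u \<le> real n" "dist (T u) (y0 + w) < \<delta>/2" by auto
    have "y0 \<in> closure (T ` cball 0 (real n))" using dense y0 e by simp
    then have "\<exists>y\<in>T ` cball 0 (real n). dist y y0 < \<delta>/2"
      using \<delta> unfolding closure_approachable by (meson half_gt_zero)
    then obtain v where v: "norm v \<le> real n" "dist (T v) y0 < \<delta>/2" by auto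
    have "norm (u - v) \<le> 2 * real n"
      using u v norm_triangle_ineq4[of u v] by simp
    moreover have "norm (w - T (u - v)) < \<delta>"
    proof -
      have "w - T (u - v) = (y0 + w - T u) - (y0 - T v)" by (simp add: T.diff)
      then have "norm (w - T (u - v)) \<le> norm (y0 + w - T u) + norm (y0 - T v)"
        by (metis norm_triangle_ineq4)
      then show ?thesis using u v by (simp add: dist_norm norm_minus_commute)
    qed
    ultimately show ?thesis by blast
  qed
  show ?thesis using that[OF e _ small] by simp
qed

lemma approximate_preimages_bounded:
  fixes T :: "'a::banach \<Rightarrow> 'c::banach"
  assumes T: "bounded_linear T" and closed_range: "closed (range T)"
  shows "\<exists>M>0. \<forall>w\<in>range T. \<forall>\<delta>>0. \<exists>x. norm x \<le> M * norm w \<and> norm (w - T x) < \<delta>"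
proof -
  interpret T: bounded_linear T by (rule T)
  obtain e K where e: "e > 0" and K: "0 \<le> K" and small:
    "\<And>w \<delta>. w \<in> range T \<Longrightarrow> norm w < e \<Longrightarrow> \<delta> > 0 \<Longrightarrow> \<exists>x. norm x \<le> K \<and> norm (w - T x) < \<delta>"
    using approximate_preimages_near_zero[OF T closed_range] by blast
  define M where "M = (2 * K + 1) / e"
  have "\<exists>x. norm x \<le> M * norm w \<and> norm (w - T x) < \<delta>"
    if w: "w \<in> range T" and \<delta>: "\<delta> > 0" for w \<delta>
  proof (cases "w = 0")
    case True
    then show ?thesis using \<delta> by (intro exI[of _ 0]) simp
  next
    case False
    define s where "s = e / (2 * norm w)"
    have s: "s > 0" using False e by (simp add: s_def)
    have "scaleR s w \<in> range T" using w by (auto simp flip: T.scaleR)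
    moreover have "norm (scaleR s w) < e" using False e by (simp add: s_def)
    ultimately obtain x where x: "norm x \<le> K" "norm (scaleR s w - T x) < s * \<delta>"
      using small[of "scaleR s w" "s * \<delta>"] s \<delta> by auto
    have "norm (scaleR (1/s) x) \<le> 2 * K / e * norm w"
      using x s False e by (simp add: s_def field_simps)
    also have "\<dots> \<le> M * norm w"
      unfolding M_def using e by (intro mult_right_mono divide_right_mono) auto
    finally have "norm (scaleR (1/s) x) \<le> M * norm w" .
    moreover have "norm (w - T (scaleR (1/s) x)) < \<delta>"
    proof -
      have "w - T (scaleR (1/s) x) = scaleR (1/s) (scaleR s w - T x)"
        using s by (simp add: T.scaleR scaleR_diff_right)
      then have "norm (w - T (scaleR (1/s) x)) = norm (scaleR s w - T x) / s" using s by simp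
      then show ?thesis using x s by (simp add: divide_less_eq mult.commute)
    qed
    ultimately show ?thesis by blast
  qed
  moreover have "M > 0" using e K by (simp add: M_def)
  ultimately show ?thesis by blast
qed

lemma telescoping_series_preimage:
  fixes T :: "'a::banach \<Rightarrow> 'c::real_normed_vector"
  assumes T: "bounded_linear T"
    and x_bound: "\<And>k. norm (x k) \<le> C * (1/2)^k"
    and partial: "\<And>n. (\<Sum>k<n. T (x k)) = w - r n" and r_lim: "r \<longlonglongrightarrow> 0"
  shows "T (suminf x) = w \<and> norm (suminf x) \<le> 2 * C"
proof
  have geometric: "summable (\<lambda>k. C * (1/2::real)^k)"
    by (intro summable_mult summable_geometric) simp
  have summable_norm_x: "summable (\<lambda>k. norm (x k))"
    by (rule summable_comparison_test[OF _ geometric]) (use x_bound in auto)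
  have "(\<lambda>k. T (x k)) sums w"
    unfolding sums_def partial using tendsto_diff[OF tendsto_const r_lim, of w] by simp
  then show "T (suminf x) = w"
    using bounded_linear.suminf[OF T summable_norm_cancel[OF summable_norm_x]] sums_unique by metis
  have "norm (suminf x) \<le> (\<Sum>k. norm (x k))" by (rule summable_norm[OF summable_norm_x])
  also have "\<dots> \<le> (\<Sum>k. C * (1/2::real)^k)"
    by (rule suminf_le[OF _ summable_norm_x geometric]) (use x_bound in auto)
  also have "\<dots> = 2 * C"
    using suminf_geometric[of "1/2::real"] by (simp add: suminf_mult)
  finally show "norm (suminf x) \<le> 2 * C" .
qed

text \<open>Successive approximation: each step removes an approximate preimage of the residual, so the
  residuals halve and the corrections form a convergent series.\<close>
lemma exact_preimage_if_approximate_preimages: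
  fixes T :: "'a::banach \<Rightarrow> 'c::real_normed_vector"
  assumes T: "bounded_linear T" and M: "0 \<le> M"
    and approx: "\<And>w \<delta>. w \<in> range T \<Longrightarrow> \<delta> > 0 \<Longrightarrow> \<exists>x. norm x \<le> M * norm w \<and> norm (w - T x) < \<delta>"
    and w: "w \<in> range T"
  shows "\<exists>x. T x = w \<and> norm x \<le> 2 * M * norm w"
proof (cases "w = 0")
  case True
  then show ?thesis by (intro exI[of _ 0]) (simp add: linear_simps(3)[OF T])
next
  case False
  interpret T: bounded_linear T by (rule T)
  define \<eta> where "\<eta> = norm w"
  have \<eta>: "\<eta> > 0" using False by (simp add: \<eta>_def)
  obtain pre where pre: "\<And>u \<delta>. u \<in> range T \<Longrightarrow> \<delta> > 0 \<Longrightarrow>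
      norm (pre u \<delta>) \<le> M * norm u \<and> norm (u - T (pre u \<delta>)) < \<delta>"
    using approx by metis
  define r where "r = rec_nat w (\<lambda>k rk. rk - T (pre rk (\<eta> * (1/2)^(Suc k))))"
  define x where "x k = pre (r k) (\<eta> * (1/2)^(Suc k))" for k
  have r0: "r 0 = w" by (simp add: r_def)
  have rSuc: "r (Suc k) = r k - T (x k)" for k by (simp add: r_def x_def)
  have r: "r k \<in> range T \<and> norm (r k) \<le> \<eta> * (1/2)^k" for k
  proof (induction k)
    case 0
    show ?case by (simp add: r0 w \<eta>_def)
  next
    case (Suc k)
    then have "norm (r k - T (x k)) < \<eta> * (1/2)^(Suc k)"
      using pre[of "r k" "\<eta> * (1/2)^(Suc k)"] \<eta> by (simp add: x_def)
    moreover have "r k - T (x k) \<in> range T" using Suc by (auto simp flip: T.diff)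
    ultimately show ?case by (simp add: rSuc)
  qed
  have "norm (x k) \<le> M * \<eta> * (1/2)^k" for k
  proof -
    have "norm (x k) \<le> M * norm (r k)"
      using pre[of "r k" "\<eta> * (1/2)^(Suc k)"] r[of k] \<eta> by (simp add: x_def)
    also have "\<dots> \<le> M * (\<eta> * (1/2)^k)" using r[of k] M by (intro mult_left_mono) auto
    finally show ?thesis by (simp add: mult.assoc)
  qed
  moreover have "(\<Sum>k<n. T (x k)) = w - r n" for n
    by (induction n) (simp_all add: r0 rSuc)
  moreover have "r \<longlonglongrightarrow> 0"
  proof (rule Lim_null_comparison)
    show "\<forall>\<^sub>F n in sequentially. norm (r n) \<le> \<eta> * (1/2)^n" using r by simp
    show "(\<lambda>n. \<eta> * (1/2::real)^n) \<longlonglongrightarrow> 0"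
      by (intro tendsto_mult_right_zero LIMSEQ_power_zero) simp
  qed
  ultimately have "T (suminf x) = w \<and> norm (suminf x) \<le> 2 * (M * \<eta>)"
    by (rule telescoping_series_preimage[OF T])
  then show ?thesis by (auto simp: \<eta>_def mult.assoc)
qed

lemma bounded_below_if_inj_closed_range:
  fixes T :: "'a::banach \<Rightarrow> 'c::banach"
  assumes T: "bounded_linear T" and "inj T" and "closed (range T)"
  shows "\<exists>d>0. \<forall>x. d * norm x \<le> norm (T x)"
proof -
  obtain M where M: "M > 0"
    and approx: "\<And>w \<delta>. w \<in> range T \<Longrightarrow> \<delta> > 0 \<Longrightarrow> \<exists>x. norm x \<le> M * norm w \<and> norm (w - T x) < \<delta>"
    using approximate_preimages_bounded[OF T \<open>closed (range T)\<close>] by blast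
  have "norm x \<le> 2 * M * norm (T x)" for x
    using exact_preimage_if_approximate_preimages[OF T _ approx, of "T x"] M \<open>inj T\<close>
    by (auto dest: injD)
  then have "1 / (2 * M) * norm x \<le> norm (T x)" for x
    using M by (simp add: field_simps)
  then show ?thesis using M by (intro exI[of _ "1 / (2 * M)"]) auto
qed

section \<open>Operator algebras isomorphic to a C*-algebra\<close>

lemma continuous_homogeneous_imp_bounded:
  fixes f :: "'a::real_normed_vector \<Rightarrow> 'b::real_normed_vector"
  assumes cont: "continuous_on D f" and "0 \<in> D" and f0: "f 0 = 0"
    and D_scaleR: "\<And>S r. S \<in> D \<Longrightarrow> scaleR r S \<in> D"
    and f_scaleR: "\<And>S r. S \<in> D \<Longrightarrow> f (scaleR r S) = scaleR r (f S)"
  shows "\<exists>K>0. \<forall>S\<in>D. norm (f S) \<le> K * norm S"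
proof -
  obtain \<delta> where \<delta>: "\<delta> > 0" and near0: "\<And>S. S \<in> D \<Longrightarrow> dist S 0 < \<delta> \<Longrightarrow> dist (f S) (f 0) < 1"
    using cont \<open>0 \<in> D\<close> unfolding continuous_on_iff by (meson zero_less_one)
  have "norm (f S) \<le> (2/\<delta>) * norm S" if S: "S \<in> D" for S
  proof (cases "S = 0")
    case True
    then show ?thesis using f0 by simp
  next
    case False
    define r where "r = \<delta> / (2 * norm S)"
    have r: "r > 0" using False \<delta> by (simp add: r_def)
    have "norm (scaleR r S) < \<delta>" using False \<delta> by (simp add: r_def)
    then have "r * norm (f S) < 1"
      using near0[OF D_scaleR[OF S, of r]] f_scaleR[OF S] f0 r by simp
    then show ?thesis using r False \<delta> by (simp add: r_def field_simps)
  qed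
  then show ?thesis using \<delta> by (intro exI[of _ "2/\<delta>"]) auto
qed

lemma norm_blinfun_le_if_bounded_below:
  fixes S R :: "'a::real_normed_vector \<Rightarrow>\<^sub>L 'b::real_normed_vector"
  assumes d: "d > 0" and low: "\<And>v. d * norm v \<le> norm (g v)" and eq: "\<And>x. g (S x) = R x"
  shows "d * norm S \<le> norm R"
proof -
  have "norm S \<le> norm R / d"
  proof (rule norm_blinfun_bound)
    show "0 \<le> norm R / d" using d by simp
    fix x
    have "d * norm (S x) \<le> norm R * norm x"
      using low[of "S x"] norm_blinfun[of R x] eq by simp
    then show "norm (S x) \<le> norm R / d * norm x" using d by (simp add: field_simps)
  qed
  then show ?thesis using d by (simp add: field_simps)
qed

locale cstar_isomorphic_subalgebra =
  fixes A :: "('a::complex_banach \<Rightarrow>\<^sub>L 'a) set" and \<phi> :: "('a \<Rightarrow>\<^sub>L 'a) \<Rightarrow> 'b::cstar_algebra"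
  assumes subalgebra: "subalgebra_BX A" and iso: "bicont_alg_iso A \<phi>"
begin

abbreviation \<psi> :: "'b \<Rightarrow> ('a \<Rightarrow>\<^sub>L 'a)" where "\<psi> \<equiv> inv_into A \<phi>"

lemma zero_in: "0 \<in> A"
  using subalgebra by (simp add: subalgebra_BX_def)

lemma add_in: "S \<in> A \<Longrightarrow> T \<in> A \<Longrightarrow> S + T \<in> A"
  using subalgebra by (simp add: subalgebra_BX_def)

lemma comp_in: "S \<in> A \<Longrightarrow> T \<in> A \<Longrightarrow> S o\<^sub>L T \<in> A"
  using subalgebra by (simp add: subalgebra_BX_def)

lemma cscale_in: "T \<in> A \<Longrightarrow> \<exists>S\<in>A. \<forall>x. S x = cscale c (T x)"
  using subalgebra by (simp add: subalgebra_BX_def)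

lemma scaleR_in: "S \<in> A \<Longrightarrow> scaleR r S \<in> A"
  using cscale_in[of S "complex_of_real r"]
  by (metis blinfun_eqI cscale_of_real scaleR_blinfun.rep_eq)

lemma diff_in: "S \<in> A \<Longrightarrow> T \<in> A \<Longrightarrow> S - T \<in> A"
  using add_in[of S "scaleR (-1) T"] scaleR_in[of T "-1"] by simp

lemma hom_add: "S \<in> A \<Longrightarrow> T \<in> A \<Longrightarrow> \<phi> (S + T) = \<phi> S + \<phi> T"
  using iso by (simp add: bicont_alg_iso_def)

lemma hom_comp: "S \<in> A \<Longrightarrow> T \<in> A \<Longrightarrow> \<phi> (S o\<^sub>L T) = \<phi> S * \<phi> T"
  using iso by (simp add: bicont_alg_iso_def)

lemma hom_zero [simp]: "\<phi> 0 = 0"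
  using hom_add[OF zero_in zero_in] by simp

lemma hom_diff: "S \<in> A \<Longrightarrow> T \<in> A \<Longrightarrow> \<phi> (S - T) = \<phi> S - \<phi> T"
  using hom_add[of "S - T" T] diff_in[of S T] by (simp add: eq_diff_eq)

lemma hom_scaleR: "S \<in> A \<Longrightarrow> \<phi> (scaleR r S) = scaleR r (\<phi> S)"
  using iso scaleR_in[of S r] unfolding bicont_alg_iso_def
  by (simp add: cscale_of_real[symmetric] scaleR_blinfun.rep_eq)

lemma hom_inj: "S \<in> A \<Longrightarrow> T \<in> A \<Longrightarrow> \<phi> S = \<phi> T \<Longrightarrow> S = T"
  using iso by (auto simp: bicont_alg_iso_def bij_betw_def dest: inj_onD)

lemma inv_in [simp]: "\<psi> z \<in> A"
  using iso by (simp add: bicont_alg_iso_def bij_betw_def inv_into_into)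

lemma hom_inv [simp]: "\<phi> (\<psi> z) = z"
  using iso by (simp add: bicont_alg_iso_def bij_betw_def f_inv_into_f)

lemma hom_bounded: "\<exists>K>0. \<forall>S\<in>A. norm (\<phi> S) \<le> K * norm S"
  using iso zero_in scaleR_in hom_scaleR
  by (intro continuous_homogeneous_imp_bounded) (auto simp: bicont_alg_iso_def)

lemma inv_bounded: "\<exists>K>0. \<forall>z. norm (\<psi> z) \<le> K * norm z"
proof -
  have "\<psi> 0 = 0" using hom_inj[OF inv_in zero_in] by simp
  moreover have "\<psi> (scaleR r z) = scaleR r (\<psi> z)" for r z
    using hom_inj[OF inv_in scaleR_in[OF inv_in]] by (simp add: hom_scaleR)
  ultimately show ?thesis
    using iso continuous_homogeneous_imp_bounded[of UNIV \<psi>] by (auto simp: bicont_alg_iso_def)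
qed

lemma bounded_below_transfer:
  fixes F :: "('a \<Rightarrow>\<^sub>L 'a) \<Rightarrow> ('a \<Rightarrow>\<^sub>L 'a)"
  assumes d: "d > 0" and F: "\<And>S. S \<in> A \<Longrightarrow> F S \<in> A"
    and low: "\<And>S. S \<in> A \<Longrightarrow> d * norm S \<le> norm (F S)"
  shows "\<exists>d'>0. \<forall>z. d' * norm z \<le> norm (\<phi> (F (\<psi> z)))"
proof -
  obtain K1 where K1: "K1 > 0" "\<And>S. S \<in> A \<Longrightarrow> norm (\<phi> S) \<le> K1 * norm S"
    using hom_bounded by blast
  obtain K2 where K2: "K2 > 0" "\<And>z. norm (\<psi> z) \<le> K2 * norm z"
    using inv_bounded by blast
  have "d / (K1 * K2) * norm z \<le> norm (\<phi> (F (\<psi> z)))" for z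
  proof -
    have "d * norm z \<le> K1 * (d * norm (\<psi> z))"
      using K1(2)[of "\<psi> z"] d by simp
    also have "\<dots> \<le> K1 * norm (F (\<psi> z))" using low[of "\<psi> z"] K1 by simp
    also have "F (\<psi> z) = \<psi> (\<phi> (F (\<psi> z)))" using F[of "\<psi> z"] iso
      by (simp add: bicont_alg_iso_def bij_betw_def)
    also have "K1 * norm \<dots> \<le> K1 * (K2 * norm (\<phi> (F (\<psi> z))))" using K1 K2(2) by simp
    finally show ?thesis using K1 K2 by (simp add: field_simps)
  qed
  then show ?thesis using d K1 K2 by (intro exI[of _ "d / (K1 * K2)"]) auto
qed

text \<open>Left multiplication by \<open>1 - b\<close> is bounded below on \<open>A\<close>, hence so is left multiplication by
  \<open>1 - \<phi> b\<close> on the C*-algebra; the resulting left quasi-inverse of \<open>\<phi> b\<close> is a right one by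
  quasi-direct finiteness, and pulls back to a right inverse of \<open>1 - b\<close>.\<close>
lemma surj_id_minus_if_bounded_below:
  assumes qdf: "quasi_directly_finite TYPE('b)" and b: "b \<in> A"
    and d: "d > 0" and low: "\<And>x. d * norm x \<le> norm (x - b x)"
  shows "surj (\<lambda>x. x - b x)"
proof -
  define F :: "('a \<Rightarrow>\<^sub>L 'a) \<Rightarrow> ('a \<Rightarrow>\<^sub>L 'a)" where "F S = S - (b o\<^sub>L S)" for S
  have F: "S \<in> A \<Longrightarrow> F S \<in> A" for S using diff_in comp_in b by (simp add: F_def)
  have "S \<in> A \<Longrightarrow> d * norm S \<le> norm (F S)" for S
    by (rule norm_blinfun_le_if_bounded_below[OF d low]) (simp add: F_def blinfun.diff_left)
  then obtain d' where d': "d' > 0" "\<And>z. d' * norm z \<le> norm (\<phi> (F (\<psi> z)))"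
    using bounded_below_transfer[of d F] d F by blast
  have "\<phi> (F (\<psi> z)) = z - \<phi> b * z" for z
    using hom_diff[OF inv_in comp_in[OF b inv_in]] hom_comp[OF b inv_in] by (simp add: F_def)
  then obtain c where "qdiamond c (\<phi> b) = 0"
    using left_quasi_inverse_if_bounded_below[of d' "\<phi> b"] d' by auto
  then have "qdiamond (\<phi> b) c = 0"
    using qdf unfolding quasi_directly_finite_def by blast
  then have "\<phi> (b + \<psi> c - (b o\<^sub>L \<psi> c)) = \<phi> 0"
    using b by (simp add: qdiamond_def hom_diff hom_add hom_comp add_in comp_in)
  then have "b + \<psi> c - (b o\<^sub>L \<psi> c) = 0"
    using b by (intro hom_inj) (simp_all add: add_in comp_in diff_in zero_in)
  then have "b x + \<psi> c x - b (\<psi> c x) = 0" for x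
    by (metis blinfun.diff_left blinfun.add_left blinfun_apply_blinfun_compose zero_blinfun.rep_eq)
  then have "(x - \<psi> c x) - b (x - \<psi> c x) = x" for x
    by (simp add: blinfun.diff_right algebra_simps)
  then show ?thesis by (intro surjI[where f = "\<lambda>x. x - \<psi> c x"]) simp
qed

text \<open>Here \<open>\<phi> a\<close> is bounded below as a left multiplier, so the C*-algebra has a unit \<open>e\<close>;
  then \<open>a \<circ> \<psi> e = a\<close>, and injectivity of \<open>a\<close> forces \<open>\<psi> e = id\<close>.\<close>
lemma id_in_if_bounded_below:
  assumes a: "a \<in> A" and d: "d > 0" and low: "\<And>x. d * norm x \<le> norm (a x)"
  shows "id_blinfun \<in> A"
proof -
  have "S \<in> A \<Longrightarrow> d * norm S \<le> norm (a o\<^sub>L S)" for S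
    by (rule norm_blinfun_le_if_bounded_below[OF d low]) simp
  then obtain d' where d': "d' > 0" "\<And>z. d' * norm z \<le> norm (\<phi> (a o\<^sub>L \<psi> z))"
    using bounded_below_transfer[of d "\<lambda>S. a o\<^sub>L S"] d comp_in[OF a] by blast
  have "d' * norm z \<le> norm (\<phi> a * z)" for z
    using d'(2)[of z] hom_comp[OF a inv_in, of z] by simp
  then obtain e :: 'b where e: "\<And>z. e * z = z \<and> z * e = z"
    using unit_exists_if_mult_bounded_below[of d' "\<phi> a"] d'(1) by blast
  have "\<phi> (a o\<^sub>L \<psi> e) = \<phi> a" using hom_comp[OF a inv_in] e by simp
  then have ae: "a o\<^sub>L \<psi> e = a" using hom_inj comp_in[OF a inv_in] a by blast
  have "\<psi> e = id_blinfun"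
  proof (rule blinfun_eqI)
    fix x
    have "a (\<psi> e x - x) = 0"
      using ae by (metis blinfun.diff_right blinfun_apply_blinfun_compose diff_self)
    then show "\<psi> e x = id_blinfun x" using low[of "\<psi> e x - x"] d by (simp add: mult_le_0_iff)
  qed
  then show ?thesis using inv_in[of e] by simp
qed

lemma minus_cscale_eq_cscale_id_minus:
  assumes a: "a \<in> A" and d: "d > 0" and low: "\<And>x. d * norm x \<le> norm (a x - cscale l x)"
  obtains b c where "b \<in> A" "c \<noteq> 0" "\<And>x. a x - cscale l x = cscale c (x - b x)"
proof (cases "l = 0")
  case True
  then have "id_blinfun \<in> A" using id_in_if_bounded_below[OF a d] low by simp
  then show ?thesis
    using True a by (intro that[of "id_blinfun - a" 1]) (simp_all add: diff_in blinfun.diff_left cscale_one)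
next
  case False
  obtain b where b: "b \<in> A" "\<And>x. b x = cscale (inverse l) (a x)"
    using cscale_in[OF a] by blast
  have "a x - cscale l x = cscale (- l) (x - b x)" for x
    using False by (simp add: b(2) cscale_diff_right cscale_minus_left)
  then show ?thesis using False b(1) by (intro that) auto
qed

lemma surj_minus_cscale_if_bounded_below:
  assumes qdf: "quasi_directly_finite TYPE('b)" and a: "a \<in> A"
    and d: "d > 0" and low: "\<And>x. d * norm x \<le> norm (a x - cscale l x)"
  shows "surj (\<lambda>x. a x - cscale l x)"
proof -
  obtain b c where b: "b \<in> A" and c: "c \<noteq> 0" and eq: "\<And>x. a x - cscale l x = cscale c (x - b x)"
    using minus_cscale_eq_cscale_id_minus[OF a d low] by blast
  have "d / cmod c * norm x \<le> norm (x - b x)" for x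
    using low[of x] c by (simp add: eq norm_cscale field_simps)
  then have "surj (\<lambda>x. x - b x)"
    using d c by (intro surj_id_minus_if_bounded_below[OF qdf b, of "d / cmod c"]) auto
  then have "\<exists>x. cscale c (x - b x) = v" for v
    by (metis surjD c cscale_cscale_inverse)
  then show ?thesis by (simp add: eq surj_def) (metis)
qed

end

theorem theorem1p1:
  fixes A :: "('a::complex_banach \<Rightarrow>\<^sub>L 'a) set"
    and \<phi> :: "('a \<Rightarrow>\<^sub>L 'a) \<Rightarrow> 'b::cstar_algebra"
  assumes "subalgebra_BX A"
    and "closed A"
    and "bicont_alg_iso A \<phi>"
    and "quasi_directly_finite TYPE('b)"
  shows "surjunctive A"
proof -
  interpret cstar_isomorphic_subalgebra A \<phi> using assms(1,3) by unfold_locales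
  show ?thesis unfolding surjunctive_def residual_spectrum_def
  proof (intro ballI equals0I)
    fix a l assume a: "a \<in> A"
    let ?f = "\<lambda>x. a x - cscale l x"
    assume "l \<in> {l. inj (\<lambda>x. a x - cscale l x) \<and> closed (range (\<lambda>x. a x - cscale l x))
                   \<and> range (\<lambda>x. a x - cscale l x) \<noteq> UNIV}"
    then have "inj ?f" "closed (range ?f)" "\<not> surj ?f" by simp_all
    moreover have "bounded_linear ?f"
      by (intro bounded_linear_sub blinfun.bounded_linear_right bounded_linear_cscale)
    ultimately obtain d where "d > 0" "\<And>x. d * norm x \<le> norm (?f x)"
      using bounded_below_if_inj_closed_range by blast
    then show False
      using surj_minus_cscale_if_bounded_below[OF assms(4) a] \<open>\<not> surj ?f\<close> by blast
  qed
qed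

end
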